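(* For every $n\ge1$, the $\mathbb{Q}$-space $I(G,* )\cap P^G_n$ is spanned by the elements $m-\alpha(m)$, where $m$ ranges over strongly multilinear monomials of degree $n$ and $\alpha$ over path transformations of $m$.
   Context: Let $G=\{g_1=e,\dots,g_k\}$ be a finite group of order $k$. Index rows/columns of $k\times k$ matrices by $G$, let $E_{a,b}$ be matrix units, $P_g=\sum_{h\in G}E_{h,hg}$, and give $M_k(\mathbb{C})$ the $G$-crossed-product grading $M_k(\mathbb{C})_g=\{DP_g: D\text{ diagonal}\}$, with involution $*$ = transpose. $F=\mathbb{Q}\{x_{i,g},x^*_{i,g}: i\ge1,g\in G\}$ is the free algebra with involution $*$ exchanging $x_{i,g}\leftrightarrow x^*_{i,g}$. $I(G,* )$ is the set of $f\in F$ vanishing under every substitution $x_{i,g}\mapsto A_{i,g}\in M_k(\mathbb{C})_g$, $x^*_{i,g}\mapsto A_{i,g}^T$. $W_n=S_n\times\{\pm1\}^n$ acts on monomials: for $\alpha=(\pi,\gamma)$ and $m=x_{i_1,\sigma_{i_1}}^{\epsilon_{i_1}}\cdots x_{i_n,\sigma_{i_n}}^{\epsilon_{i_n}}$ ($\{i_1,\dots,i_n\}=\{1,\dots,n\}$), $\alpha(m)=x_{\pi(i_1),\sigma_{\pi(i_1)}}^{\delta_{\pi(i_1)}}\cdots x_{\pi(i_n),\sigma_{\pi(i_n)}}^{\delta_{\pi(i_n)}}$ with $\delta_j=\epsilon_j$ if $\gamma_j=1$ and the opposite choice if $\gamma_j=-1$. A strongly multilinear monomial of degree $n$ is $m=x_{j_1,h_1}^{\epsilon_1}\cdots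 x_{j_n,h_n}^{\epsilon_n}$ with $(j_1,\dots,j_n)$ a permutation of $(1,\dots,n)$, $h_r\in G$, $\epsilon_r\in\{\text{nothing},*\}$; $P^G_n$ is the $\mathbb{Q}$-span of all of them. Put $\tau_r=h_r$ if $\epsilon_r$ is nothing, $\tau_r=h_r^{-1}$ if $\epsilon_r=*$; $w(m)=\tau_1\cdots\tau_n$; for $i=j_r$, $s_m(i)=\tau_1\cdots\tau_{r-1}$ if $\epsilon_r$ is nothing and $s_m(i)=\tau_1\cdots\tau_{r-1}h_r^{-1}$ if $\epsilon_r=*$. $\alpha\in W_n$ is a path transformation of $m$ if $w(\alpha(m))=w(m)$ and $s_{\alpha(m)}(i)=s_m(i)$ for all $i$. *)

theory Defs
  imports Complex_Main "HOL-Algebra.Group" "HOL-Combinatorics.Permutations"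
begin

(* Letters of the free algebra F: (i, g, starred); starred = True means x^*_{i,g}. *)
type_synonym 'g letter = "nat \<times> 'g \<times> bool"
type_synonym 'g word = "'g letter list"
(* Elements of F: Q-valued functions on words (finite support required separately). *)
type_synonym 'g fpoly = "'g word \<Rightarrow> rat"

(* k x k complex matrices with rows/columns indexed by G (entries outside carrier G are irrelevant) *)
type_synonym 'g mat = "'g \<Rightarrow> 'g \<Rightarrow> complex"

definition mmult :: "('g, 'b) monoid_scheme \<Rightarrow> 'g mat \<Rightarrow> 'g mat \<Rightarrow> 'g mat" where
  "mmult G A B = (\<lambda>a b. \<Sum>c\<in>carrier G. A a c * B c b)"

definition idmat :: "'g mat" where
  "idmat = (\<lambda>a b. if a = b then 1 else 0)"

definition diagmat :: "('g \<Rightarrow> complex) \<Rightarrow> 'g mat" where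
  "diagmat d = (\<lambda>a b. if a = b then d a else 0)"

definition transp :: "'g mat \<Rightarrow> 'g mat" where
  "transp A = (\<lambda>a b. A b a)"

definition Pmat :: "('g, 'b) monoid_scheme \<Rightarrow> 'g \<Rightarrow> 'g mat" where
  "Pmat G g = (\<lambda>a b. if b = a \<otimes>\<^bsub>G\<^esub> g then 1 else 0)"

definition grade :: "('g, 'b) monoid_scheme \<Rightarrow> 'g \<Rightarrow> 'g mat set" where
  "grade G g = {mmult G (diagmat d) (Pmat G g) | d. True}"

definition fsupp :: "'g fpoly \<Rightarrow> 'g word set" where
  "fsupp p = {w. p w \<noteq> 0}"

definition Falg :: "('g, 'b) monoid_scheme \<Rightarrow> 'g fpoly set" where
  "Falg G = {p. finite (fsupp p) \<and>
     (\<forall>w\<in>fsupp p. \<forall>l\<in>set w. 1 \<le> fst l \<and> fst (snd l) \<in> carrier G)}"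

definition letmat :: "(nat \<Rightarrow> 'g \<Rightarrow> 'g mat) \<Rightarrow> 'g letter \<Rightarrow> 'g mat" where
  "letmat A l = (case l of (i, g, st) \<Rightarrow> if st then transp (A i g) else A i g)"

definition wordmat :: "('g, 'b) monoid_scheme \<Rightarrow> (nat \<Rightarrow> 'g \<Rightarrow> 'g mat) \<Rightarrow> 'g word \<Rightarrow> 'g mat" where
  "wordmat G A w = foldr (\<lambda>l M. mmult G (letmat A l) M) w idmat"

definition evalp :: "('g, 'b) monoid_scheme \<Rightarrow> (nat \<Rightarrow> 'g \<Rightarrow> 'g mat) \<Rightarrow> 'g fpoly \<Rightarrow> 'g mat" where
  "evalp G A p = (\<lambda>a b. \<Sum>w\<in>fsupp p. of_rat (p w) * wordmat G A w a b)"

definition Istar :: "('g, 'b) monoid_scheme \<Rightarrow> 'g fpoly set" where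
  "Istar G = {f \<in> Falg G. \<forall>A. (\<forall>i g. g \<in> carrier G \<longrightarrow> A i g \<in> grade G g) \<longrightarrow>
      (\<forall>a\<in>carrier G. \<forall>b\<in>carrier G. evalp G A f a b = 0)}"

definition strong_mlin :: "('g, 'b) monoid_scheme \<Rightarrow> nat \<Rightarrow> 'g word \<Rightarrow> bool" where
  "strong_mlin G n m \<longleftrightarrow> length m = n \<and> distinct (map fst m) \<and> set (map fst m) = {1..n}
      \<and> (\<forall>l\<in>set m. fst (snd l) \<in> carrier G)"

definition mono :: "'g word \<Rightarrow> 'g fpoly" where
  "mono m = (\<lambda>w. if w = m then 1 else 0)"

definition PGn :: "('g, 'b) monoid_scheme \<Rightarrow> nat \<Rightarrow> 'g fpoly set" where
  "PGn G n = {p. finite (fsupp p) \<and> (\<forall>w\<in>fsupp p. strong_mlin G n w)}"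

definition Qspan :: "'g fpoly set \<Rightarrow> 'g fpoly set" where
  "Qspan S = {p. \<exists>T c. finite T \<and> T \<subseteq> S \<and> p = (\<lambda>w. \<Sum>t\<in>T. c t * t w)}"

definition letter_of :: "'g word \<Rightarrow> nat \<Rightarrow> 'g letter" where
  "letter_of m j = hd (filter (\<lambda>l. fst l = j) m)"

(* action of alpha = (pi, gamma) in W_n; gamma j = True means gamma_j = 1, False means -1 *)
definition act :: "(nat \<Rightarrow> nat) \<Rightarrow> (nat \<Rightarrow> bool) \<Rightarrow> 'g word \<Rightarrow> 'g word" where
  "act \<pi> \<gamma> m = map (\<lambda>l. let j = \<pi> (fst l); lj = letter_of m j
       in (j, fst (snd lj), if \<gamma> j then snd (snd lj) else \<not> snd (snd lj))) m"

definition tau :: "('g, 'b) monoid_scheme \<Rightarrow> 'g letter \<Rightarrow> 'g" where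
  "tau G l = (if snd (snd l) then inv\<^bsub>G\<^esub> (fst (snd l)) else fst (snd l))"

definition gprod :: "('g, 'b) monoid_scheme \<Rightarrow> 'g list \<Rightarrow> 'g" where
  "gprod G xs = foldl (\<lambda>a b. a \<otimes>\<^bsub>G\<^esub> b) \<one>\<^bsub>G\<^esub> xs"

definition wgt :: "('g, 'b) monoid_scheme \<Rightarrow> 'g word \<Rightarrow> 'g" where
  "wgt G m = gprod G (map (tau G) m)"

definition spos :: "('g, 'b) monoid_scheme \<Rightarrow> 'g word \<Rightarrow> nat \<Rightarrow> 'g" where
  "spos G m r = (let p = gprod G (map (tau G) (take r m)) in
      if snd (snd (m ! r)) then p \<otimes>\<^bsub>G\<^esub> inv\<^bsub>G\<^esub> (fst (snd (m ! r))) else p)"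

definition svar :: "('g, 'b) monoid_scheme \<Rightarrow> 'g word \<Rightarrow> nat \<Rightarrow> 'g" where
  "svar G m i = spos G m (THE r. r < length m \<and> fst (m ! r) = i)"

definition path_transf :: "('g, 'b) monoid_scheme \<Rightarrow> nat \<Rightarrow> 'g word \<Rightarrow> (nat \<Rightarrow> nat) \<Rightarrow> (nat \<Rightarrow> bool) \<Rightarrow> bool" where
  "path_transf G n m \<pi> \<gamma> \<longleftrightarrow> \<pi> permutes {1..n} \<and>
     wgt G (act \<pi> \<gamma> m) = wgt G m \<and>
     (\<forall>i\<in>{1..n}. svar G (act \<pi> \<gamma> m) i = svar G m i)"

end

theory Submission
  imports Defs
begin

(*
  Under a graded substitution x_{i,h} |-> D_{i,h} P_h every letter is a monomial matrix, so a
  strongly multilinear monomial m evaluates to a monomial matrix: row a has a single nonzero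
  entry, in column a w(m), and it is the product over the variables i of the diagonal entry of
  D_{i,h_i} at row a s_m(i).  Hence the value of m depends only on its path key (the weight w(m),
  the labels h_i and the rows s_m(i)).  Path transformations are exactly the elements of W_n
  preserving the path key, and any two monomials with the same key differ by one, so the
  m - alpha(m) lie in the ideal.  Conversely, substituting matrix units E_{s, s h} read off the
  key of one monomial and taking the entry (1, w) isolates the sum of the coefficients of f over
  that key class; for f in the ideal these sums vanish, so f is a combination of differences of
  monomials with equal keys.
*)

definition graded_subst :: "('g, 'b) monoid_scheme \<Rightarrow> (nat \<Rightarrow> 'g \<Rightarrow> 'g mat) \<Rightarrow> bool" where
  "graded_subst G A \<longleftrightarrow> (\<forall>i g. g \<in> carrier G \<longrightarrow> A i g \<in> grade G g)"

text \<open>For graded \<open>A\<close>, the matrix \<open>A i h = D P\<^sub>h\<close> has the single nonzero entry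
  \<open>diag_entry G A i h x\<close> (the \<open>x\<close>-th entry of \<open>D\<close>) in row \<open>x\<close>, and \<open>letter_entry G A l x\<close>
  is the nonzero entry in row \<open>x\<close> of the matrix of the letter \<open>l\<close> (for a starred letter,
  row \<open>x\<close> of \<open>(D P\<^sub>h)\<^sup>T\<close> picks up \<open>D\<close> at \<open>x h\<^sup>-\<^sup>1\<close>).\<close>
definition diag_entry ::
    "('g, 'b) monoid_scheme \<Rightarrow> (nat \<Rightarrow> 'g \<Rightarrow> 'g mat) \<Rightarrow> nat \<Rightarrow> 'g \<Rightarrow> 'g \<Rightarrow> complex" where
  "diag_entry G A i h x = A i h x (x \<otimes>\<^bsub>G\<^esub> h)"

definition letter_entry ::
    "('g, 'b) monoid_scheme \<Rightarrow> (nat \<Rightarrow> 'g \<Rightarrow> 'g mat) \<Rightarrow> 'g letter \<Rightarrow> 'g \<Rightarrow> complex" where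
  "letter_entry G A l x =
     (if snd (snd l) then diag_entry G A (fst l) (fst (snd l)) (x \<otimes>\<^bsub>G\<^esub> inv\<^bsub>G\<^esub> (fst (snd l)))
      else diag_entry G A (fst l) (fst (snd l)) x)"

definition var_group :: "'g word \<Rightarrow> nat \<Rightarrow> 'g" where
  "var_group w i = fst (snd (letter_of w i))"

text \<open>Everything an evaluation of a strongly multilinear monomial can see: its weight, and for
  each variable its group label and the row \<open>s\<^sub>m(i)\<close> at which it is read.\<close>
definition path_key :: "('g, 'b) monoid_scheme \<Rightarrow> nat \<Rightarrow> 'g word \<Rightarrow> 'g \<times> (nat \<Rightarrow> 'g \<times> 'g)" where
  "path_key G n w = (wgt G w, restrict (\<lambda>i. (var_group w i, svar G w i)) {1..n})"

lemma path_key_eq_iff: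
  "path_key G n w = path_key G n w' \<longleftrightarrow>
     wgt G w = wgt G w' \<and> (\<forall>i\<in>{1..n}. var_group w i = var_group w' i \<and> svar G w i = svar G w' i)"
  unfolding path_key_def by (auto simp: fun_eq_iff restrict_def split: if_splits)

lemma filter_fst_eq_singleton:
  "distinct (map fst w) \<Longrightarrow> l \<in> set w \<Longrightarrow> filter (\<lambda>x. fst x = fst l) w = [l]"
proof (induction w)
  case (Cons x w)
  show ?case
  proof (cases "x = l")
    case True
    then have "fst l \<notin> set (map fst w)" using Cons.prems by simp
    then have "\<forall>y\<in>set w. fst y \<noteq> fst l" by (metis image_eqI set_map)
    then show ?thesis using True by (simp add: filter_empty_conv)
  next
    case False
    then show ?thesis using Cons by force
  qed
qed simp

lemma letter_of_nth:
  "distinct (map fst w) \<Longrightarrow> r < length w \<Longrightarrow> letter_of w (fst (w ! r)) = w ! r"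
  unfolding letter_of_def using filter_fst_eq_singleton[of w "w ! r"] by simp

lemma letter_of_mem:
  assumes "j \<in> set (map fst w)"
  shows "letter_of w j \<in> set w"
proof -
  have "filter (\<lambda>l. fst l = j) w \<noteq> []" using assms by (auto simp: filter_empty_conv)
  then have "hd (filter (\<lambda>l. fst l = j) w) \<in> set (filter (\<lambda>l. fst l = j) w)" by (rule hd_in_set)
  then show ?thesis unfolding letter_of_def by simp
qed

lemma svar_nth:
  assumes "distinct (map fst w)" "r < length w"
  shows "svar G w (fst (w ! r)) = spos G w r"
proof -
  have "(THE r'. r' < length w \<and> fst (w ! r') = fst (w ! r)) = r"
    using assms nth_eq_iff_index_eq[of "map fst w" _ r] by (intro the_equality) auto
  then show ?thesis unfolding svar_def by simp
qed

lemma strong_mlin_bij_betw_vars: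
  assumes "strong_mlin G n w"
  shows "bij_betw (\<lambda>r. fst (w ! r)) {..<n} {1..n}"
proof -
  have "bij_betw ((!) (map fst w)) {..<n} {1..n}"
    using bij_betw_nth[of "map fst w"] assms unfolding strong_mlin_def by simp
  then show ?thesis
    by (rule bij_betw_cong[THEN iffD1, rotated]) (use assms in \<open>simp add: strong_mlin_def\<close>)
qed

lemma strong_mlin_var_index:
  assumes "strong_mlin G n w" "i \<in> {1..n}"
  obtains r where "r < n" "fst (w ! r) = i"
proof -
  have "i \<in> (\<lambda>r. fst (w ! r)) ` {..<n}"
    using bij_betw_imp_surj_on[OF strong_mlin_bij_betw_vars[OF assms(1)]] assms(2) by simp
  then show ?thesis using that by auto
qed

lemma strong_mlin_letter:
  "strong_mlin G n w \<Longrightarrow> l \<in> set w \<Longrightarrow> 1 \<le> fst l \<and> fst (snd l) \<in> carrier G"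
  unfolding strong_mlin_def by (metis atLeastAtMost_iff image_eqI set_map)

lemma act_nth:
  "r < length m \<Longrightarrow> act \<pi> \<gamma> m ! r = (\<pi> (fst (m ! r)), fst (snd (letter_of m (\<pi> (fst (m ! r))))),
     if \<gamma> (\<pi> (fst (m ! r))) then snd (snd (letter_of m (\<pi> (fst (m ! r)))))
     else \<not> snd (snd (letter_of m (\<pi> (fst (m ! r))))))"
  by (simp add: act_def Let_def)

lemma map_fst_act: "map fst (act \<pi> \<gamma> m) = map \<pi> (map fst m)"
  by (simp add: act_def Let_def)

lemma strong_mlin_act:
  assumes m: "strong_mlin G n m" and \<pi>: "\<pi> permutes {1..n}"
  shows "strong_mlin G n (act \<pi> \<gamma> m)"
proof -
  have vars: "set (map fst m) = {1..n}" and dist: "distinct (map fst m)"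
    using m unfolding strong_mlin_def by auto
  have "distinct (map fst (act \<pi> \<gamma> m))"
    unfolding map_fst_act by (metis dist distinct_map permutes_inj_on[OF \<pi>])
  moreover have "set (map fst (act \<pi> \<gamma> m)) = {1..n}"
    unfolding map_fst_act set_map[of \<pi>] using vars permutes_image[OF \<pi>] by (simp only:)
  moreover have "fst (snd l) \<in> carrier G" if l: "l \<in> set (act \<pi> \<gamma> m)" for l
  proof -
    obtain r where "r < length (act \<pi> \<gamma> m)" "l = act \<pi> \<gamma> m ! r"
      using l[unfolded in_set_conv_nth] by blast
    then have r: "r < length m" "l = act \<pi> \<gamma> m ! r" by (simp_all add: act_def)
    have "fst (m ! r) \<in> {1..n}" using r vars nth_mem[of r "map fst m"] by simp
    then have "\<pi> (fst (m ! r)) \<in> set (map fst m)" using vars permutes_in_image[OF \<pi>] by simp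
    then have "letter_of m (\<pi> (fst (m ! r))) \<in> set m" by (rule letter_of_mem)
    then show ?thesis using r m act_nth[OF r(1)] unfolding strong_mlin_def by auto
  qed
  ultimately show ?thesis using m unfolding strong_mlin_def by (simp add: act_def)
qed

lemma var_group_act:
  assumes m: "strong_mlin G n m" and \<pi>: "\<pi> permutes {1..n}" and i: "i \<in> {1..n}"
  shows "var_group (act \<pi> \<gamma> m) i = var_group m i"
proof -
  have am: "strong_mlin G n (act \<pi> \<gamma> m)" using strong_mlin_act[OF m \<pi>] .
  obtain r where r: "r < n" "fst (act \<pi> \<gamma> m ! r) = i"
    using strong_mlin_var_index[OF am i] .
  have "letter_of (act \<pi> \<gamma> m) i = act \<pi> \<gamma> m ! r"
    using letter_of_nth[of "act \<pi> \<gamma> m" r] am r unfolding strong_mlin_def by auto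
  then show ?thesis using act_nth[of r m] r m unfolding var_group_def strong_mlin_def by simp
qed

lemma path_transf_iff_path_key:
  assumes "strong_mlin G n m" "\<pi> permutes {1..n}"
  shows "path_transf G n m \<pi> \<gamma> \<longleftrightarrow> path_key G n (act \<pi> \<gamma> m) = path_key G n m"
  using assms var_group_act[OF assms] unfolding path_transf_def path_key_eq_iff by auto

lemma path_transf_of_same_path_key:
  assumes m: "strong_mlin G n m" and m': "strong_mlin G n m'"
    and key: "path_key G n m = path_key G n m'"
  obtains \<pi> \<gamma> where "act \<pi> \<gamma> m = m'" "path_transf G n m \<pi> \<gamma>"
proof -
  let ?var = "\<lambda>w r. fst (w ! r)"
  have bij: "bij_betw (?var m) {..<n} {1..n}" using strong_mlin_bij_betw_vars[OF m] .
  have bij': "bij_betw (?var m') {..<n} {1..n}" using strong_mlin_bij_betw_vars[OF m'] .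
  \<comment> \<open>the variable at position \<open>r\<close> of \<open>m\<close> goes to the variable at position \<open>r\<close> of \<open>m'\<close>\<close>
  define \<pi> where "\<pi> i = (if i \<in> {1..n} then ?var m' (inv_into {..<n} (?var m) i) else i)" for i
  define \<gamma> where "\<gamma> j \<longleftrightarrow> snd (snd (letter_of m' j)) = snd (snd (letter_of m j))" for j
  have "bij_betw (?var m' \<circ> inv_into {..<n} (?var m)) {1..n} {1..n}"
    using bij_betw_trans[OF bij_betw_inv_into[OF bij] bij'] .
  then have "bij_betw \<pi> {1..n} {1..n}"
    by (rule bij_betw_cong[THEN iffD1, rotated]) (simp add: \<pi>_def)
  then have perm: "\<pi> permutes {1..n}"
    by (rule bij_imp_permutes) (auto simp: \<pi>_def)
  have len: "length m = n" "length m' = n" and dist': "distinct (map fst m')"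
    using m m' unfolding strong_mlin_def by auto
  have "act \<pi> \<gamma> m = m'"
  proof (rule nth_equalityI)
    show "length (act \<pi> \<gamma> m) = length m'" using len by (simp add: act_def)
  next
    fix r assume "r < length (act \<pi> \<gamma> m)"
    then have r: "r < n" using len by (simp add: act_def)
    have var: "?var m r \<in> {1..n}" using bij r by (auto dest: bij_betw_apply)
    have "inv_into {..<n} (?var m) (?var m r) = r"
      using bij r unfolding bij_betw_def by (intro inv_into_f_f) auto
    then have j: "\<pi> (?var m r) = ?var m' r" using var by (simp add: \<pi>_def)
    have "?var m' r \<in> {1..n}" using bij' r by (auto dest: bij_betw_apply)
    then have "var_group m (?var m' r) = var_group m' (?var m' r)"
      using key unfolding path_key_eq_iff by blast
    moreover have "letter_of m' (?var m' r) = m' ! r"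
      using letter_of_nth[OF dist'] r len by simp
    ultimately show "act \<pi> \<gamma> m ! r = m' ! r"
      using act_nth[of r m \<pi> \<gamma>] r len j unfolding var_group_def \<gamma>_def by (auto simp: prod_eq_iff)
  qed
  moreover have "path_transf G n m \<pi> \<gamma>"
    using path_transf_iff_path_key[OF m perm] calculation key by simp
  ultimately show ?thesis using that by blast
qed

definition path_differences :: "('g, 'b) monoid_scheme \<Rightarrow> nat \<Rightarrow> 'g fpoly set" where
  "path_differences G n = {(\<lambda>w. mono m w - mono m' w) | m m'.
     strong_mlin G n m \<and> strong_mlin G n m' \<and> path_key G n m = path_key G n m'}"

lemma path_transf_differences_eq:
  "{(\<lambda>w. mono m w - mono (act \<pi> \<gamma> m) w) | m \<pi> \<gamma>. strong_mlin G n m \<and> path_transf G n m \<pi> \<gamma>} =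
   path_differences G n"
proof (intro equalityI subsetI)
  fix t assume "t \<in> {(\<lambda>w. mono m w - mono (act \<pi> \<gamma> m) w) | m \<pi> \<gamma>.
                    strong_mlin G n m \<and> path_transf G n m \<pi> \<gamma>}"
  then obtain m \<pi> \<gamma> where t: "t = (\<lambda>w. mono m w - mono (act \<pi> \<gamma> m) w)"
    and m: "strong_mlin G n m" and pt: "path_transf G n m \<pi> \<gamma>" by blast
  have perm: "\<pi> permutes {1..n}" using pt unfolding path_transf_def by simp
  show "t \<in> path_differences G n"
    unfolding path_differences_def using t m strong_mlin_act[OF m perm]
      pt[unfolded path_transf_iff_path_key[OF m perm]] by force
next
  fix t assume "t \<in> path_differences G n"
  then obtain m m' where t: "t = (\<lambda>w. mono m w - mono m' w)" and m: "strong_mlin G n m"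
    and m': "strong_mlin G n m'" and key: "path_key G n m = path_key G n m'"
    unfolding path_differences_def by blast
  obtain \<pi> \<gamma> where "act \<pi> \<gamma> m = m'" "path_transf G n m \<pi> \<gamma>"
    using path_transf_of_same_path_key[OF m m' key] .
  then show "t \<in> {(\<lambda>w. mono m w - mono (act \<pi> \<gamma> m) w) | m \<pi> \<gamma>.
                    strong_mlin G n m \<and> path_transf G n m \<pi> \<gamma>}"
    using t m by blast
qed

lemma fsupp_lincomb_subset: "fsupp (\<lambda>w. \<Sum>t\<in>T. c t * t w) \<subseteq> \<Union> (fsupp ` T)"
proof
  fix w assume "w \<in> fsupp (\<lambda>w. \<Sum>t\<in>T. c t * t w)"
  then have "(\<Sum>t\<in>T. c t * t w) \<noteq> 0" unfolding fsupp_def by simp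
  then obtain t where "t \<in> T" "c t * t w \<noteq> 0" by (meson sum.not_neutral_contains_not_neutral)
  then show "w \<in> \<Union> (fsupp ` T)" unfolding fsupp_def by auto
qed

lemma evalp_superset:
  assumes "finite W" "fsupp p \<subseteq> W"
  shows "evalp G A p a b = (\<Sum>w\<in>W. of_rat (p w) * wordmat G A w a b)"
  unfolding evalp_def
  by (rule sum.mono_neutral_left[OF assms]) (auto simp: fsupp_def)

lemma evalp_lincomb:
  assumes "finite T" "\<forall>t\<in>T. finite (fsupp t)"
  shows "evalp G A (\<lambda>w. \<Sum>t\<in>T. c t * t w) a b = (\<Sum>t\<in>T. of_rat (c t) * evalp G A t a b)"
proof -
  define W where "W = \<Union> (fsupp ` T)"
  have W: "finite W" using assms unfolding W_def by blast
  have "evalp G A (\<lambda>w. \<Sum>t\<in>T. c t * t w) a b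
      = (\<Sum>w\<in>W. \<Sum>t\<in>T. of_rat (c t) * (of_rat (t w) * wordmat G A w a b))"
    using evalp_superset[OF W fsupp_lincomb_subset[of c T, folded W_def]]
    by (simp add: of_rat_sum of_rat_mult sum_distrib_right mult.assoc)
  also have "\<dots> = (\<Sum>t\<in>T. of_rat (c t) * (\<Sum>w\<in>W. of_rat (t w) * wordmat G A w a b))"
    by (subst sum.swap) (simp add: sum_distrib_left)
  also have "\<dots> = (\<Sum>t\<in>T. of_rat (c t) * evalp G A t a b)"
  proof (intro sum.cong refl)
    fix t assume "t \<in> T"
    then have "fsupp t \<subseteq> W" unfolding W_def by blast
    then show "of_rat (c t) * (\<Sum>w\<in>W. of_rat (t w) * wordmat G A w a b) = of_rat (c t) * evalp G A t a b"
      by (simp add: evalp_superset[OF W])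
  qed
  finally show ?thesis .
qed

lemma Istar_PGn_lincomb:
  assumes T: "finite T" "T \<subseteq> Istar G \<inter> PGn G n"
  shows "(\<lambda>w. \<Sum>t\<in>T. c t * t w) \<in> Istar G \<inter> PGn G n"
proof -
  let ?p = "\<lambda>w. \<Sum>t\<in>T. c t * t w"
  have fin: "\<forall>t\<in>T. finite (fsupp t)" using T unfolding PGn_def by auto
  have "finite (fsupp ?p)"
    using finite_subset[OF fsupp_lincomb_subset] T fin by blast
  moreover have "?p \<in> Falg G" "?p \<in> PGn G n"
    using calculation fsupp_lincomb_subset[of c T] T
    unfolding Falg_def PGn_def Istar_def by blast+
  moreover have "evalp G A ?p a b = 0"
    if "\<forall>i g. g \<in> carrier G \<longrightarrow> A i g \<in> grade G g" "a \<in> carrier G" "b \<in> carrier G" for A a b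
    using that T unfolding evalp_lincomb[OF T(1) fin] Istar_def by (intro sum.neutral) auto
  ultimately show ?thesis unfolding Istar_def by blast
qed

lemma Qspan_subset_Istar_PGn:
  "S \<subseteq> Istar G \<inter> PGn G n \<Longrightarrow> Qspan S \<subseteq> Istar G \<inter> PGn G n"
  unfolding Qspan_def by (auto dest!: Istar_PGn_lincomb[OF _ subset_trans])

lemma sum_mem_Qspan:
  assumes "finite S" "\<forall>w\<in>S. g w \<in> X"
  shows "(\<lambda>u. \<Sum>w\<in>S. c w * g w u) \<in> Qspan X"
proof -
  define d where "d t = (\<Sum>w\<in>{w\<in>S. g w = t}. c w)" for t
  have "(\<lambda>u. \<Sum>w\<in>S. c w * g w u) = (\<lambda>u. \<Sum>t\<in>g ` S. d t * t u)"
  proof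
    fix u
    have "(\<Sum>w\<in>S. c w * g w u) = (\<Sum>t\<in>g ` S. \<Sum>w\<in>{w\<in>S. g w = t}. c w * g w u)"
      using sum.image_gen[OF assms(1), of "\<lambda>w. c w * g w u" g] .
    also have "\<dots> = (\<Sum>t\<in>g ` S. d t * t u)"
      unfolding d_def sum_distrib_right by (intro sum.cong refl) auto
    finally show "(\<Sum>w\<in>S. c w * g w u) = (\<Sum>t\<in>g ` S. d t * t u)" .
  qed
  then show ?thesis unfolding Qspan_def using assms by blast
qed

text \<open>The terms \<open>rep w\<close> collect exactly the fibre sums, which vanish.\<close>
lemma fibre_sums_zero_decomposition:
  fixes f :: "'g fpoly" and \<kappa> :: "'g word \<Rightarrow> 'k"
  assumes fin: "finite (fsupp f)"
    and zero: "\<And>w0. w0 \<in> fsupp f \<Longrightarrow> (\<Sum>w\<in>{w\<in>fsupp f. \<kappa> w = \<kappa> w0}. f w) = 0"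
  obtains rep where "\<And>w. w \<in> fsupp f \<Longrightarrow> rep w \<in> fsupp f \<and> \<kappa> (rep w) = \<kappa> w"
    and "f = (\<lambda>u. \<Sum>w\<in>fsupp f. f w * (mono w u - mono (rep w) u))"
proof
  let ?S = "fsupp f"
  define rep where "rep w = (SOME v. v \<in> ?S \<and> \<kappa> v = \<kappa> w)" for w
  show rep: "rep w \<in> ?S \<and> \<kappa> (rep w) = \<kappa> w" if "w \<in> ?S" for w
    unfolding rep_def by (rule someI[of _ w]) (use that in simp)
  have rep_eq_iff: "rep w = rep w0 \<longleftrightarrow> \<kappa> w = \<kappa> w0" if "w \<in> ?S" "w0 \<in> ?S" for w w0
  proof
    assume "rep w = rep w0"
    then show "\<kappa> w = \<kappa> w0" using rep that by metis
  qed (simp add: rep_def)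
  show "f = (\<lambda>u. \<Sum>w\<in>?S. f w * (mono w u - mono (rep w) u))"
  proof
    fix u
    have "(\<Sum>w\<in>?S. f w * mono w u) = (\<Sum>w\<in>?S. if w = u then f w else 0)"
      by (intro sum.cong refl) (simp add: mono_def)
    also have "\<dots> = f u" using fin by (simp add: sum.delta fsupp_def)
    finally have diag: "(\<Sum>w\<in>?S. f w * mono w u) = f u" .
    have "(\<Sum>w\<in>?S. f w * mono (rep w) u) = (\<Sum>w\<in>?S. if rep w = u then f w else 0)"
      by (intro sum.cong refl) (auto simp: mono_def)
    also have "\<dots> = (\<Sum>w\<in>{w\<in>?S. rep w = u}. f w)"
      using fin by (simp add: sum.inter_filter)
    also have "\<dots> = 0"
    proof (cases "\<exists>w0\<in>?S. rep w0 = u")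
      case True
      then obtain w0 where w0: "w0 \<in> ?S" "rep w0 = u" by blast
      have "{w\<in>?S. rep w = u} = {w\<in>?S. \<kappa> w = \<kappa> w0}"
        using rep_eq_iff[OF _ w0(1)] unfolding w0(2)[symmetric] by auto
      then show ?thesis using zero[OF w0(1)] by simp
    next
      case False
      then have "{w\<in>?S. rep w = u} = {}" by blast
      then show ?thesis by (simp only: sum.empty)
    qed
    finally show "f u = (\<Sum>w\<in>?S. f w * (mono w u - mono (rep w) u))"
      using diag by (simp add: right_diff_distrib sum_subtractf)
  qed
qed

context group
begin

lemma tau_closed: "fst (snd l) \<in> carrier G \<Longrightarrow> tau G l \<in> carrier G"
  by (simp add: tau_def)

lemma taus_closed: "\<forall>l\<in>set w. fst (snd l) \<in> carrier G \<Longrightarrow> set (map (tau G) w) \<subseteq> carrier G"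
  using tau_closed by auto

lemma foldl_mult_closed:
  "x \<in> carrier G \<Longrightarrow> set xs \<subseteq> carrier G \<Longrightarrow> foldl (\<lambda>a b. a \<otimes> b) x xs \<in> carrier G"
  by (induction xs arbitrary: x) auto

lemma gprod_closed: "set xs \<subseteq> carrier G \<Longrightarrow> gprod G xs \<in> carrier G"
  unfolding gprod_def by (simp add: foldl_mult_closed)

lemma foldl_mult_eq_gprod:
  "x \<in> carrier G \<Longrightarrow> set xs \<subseteq> carrier G \<Longrightarrow> foldl (\<lambda>a b. a \<otimes> b) x xs = x \<otimes> gprod G xs"
proof (induction xs arbitrary: x)
  case Nil then show ?case by (simp add: gprod_def)
next
  case (Cons y ys)
  have "gprod G (y # ys) = y \<otimes> gprod G ys"
    using Cons.IH[of y] Cons.prems by (simp add: gprod_def)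
  then show ?case using Cons by (simp add: m_assoc gprod_closed)
qed

lemma gprod_Cons: "y \<in> carrier G \<Longrightarrow> set ys \<subseteq> carrier G \<Longrightarrow> gprod G (y # ys) = y \<otimes> gprod G ys"
  using foldl_mult_eq_gprod[of y ys] by (simp add: gprod_def)

lemma wgt_closed: "\<forall>l\<in>set w. fst (snd l) \<in> carrier G \<Longrightarrow> wgt G w \<in> carrier G"
  unfolding wgt_def by (intro gprod_closed taus_closed)

lemma svar_closed:
  assumes w: "strong_mlin G n w" and i: "i \<in> {1..n}"
  shows "svar G w i \<in> carrier G"
proof -
  have letters: "\<forall>l\<in>set w. fst (snd l) \<in> carrier G" and "length w = n" "distinct (map fst w)"
    using w unfolding strong_mlin_def by auto
  moreover obtain r where "r < n" "fst (w ! r) = i" using strong_mlin_var_index[OF w i] .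
  moreover have "set (map (tau G) (take r w)) \<subseteq> carrier G"
    using letters by (intro taus_closed) (meson in_set_takeD)
  ultimately show ?thesis
    using svar_nth[of w r G] gprod_closed unfolding spos_def Let_def by auto
qed

lemma var_group_closed: "strong_mlin G n w \<Longrightarrow> i \<in> {1..n} \<Longrightarrow> var_group w i \<in> carrier G"
  unfolding var_group_def strong_mlin_def using letter_of_mem[of i w] by auto

end

locale finite_group = group +
  assumes finite_carrier: "finite (carrier G)"
begin

lemma grade_entry:
  assumes "h \<in> carrier G"
  shows "mmult G (diagmat d) (Pmat G h) x y = (if x \<in> carrier G \<and> y = x \<otimes> h then d x else 0)"
proof -
  have "mmult G (diagmat d) (Pmat G h) x y =
      (\<Sum>c\<in>carrier G. if c = x then (if y = c \<otimes> h then d x else 0) else 0)"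
    unfolding mmult_def diagmat_def Pmat_def by (intro sum.cong) auto
  then show ?thesis using finite_carrier by (simp add: sum.delta)
qed

lemma graded_subst_entry:
  assumes "graded_subst G A" "h \<in> carrier G" "x \<in> carrier G"
  shows "A i h x y = (if y = x \<otimes> h then diag_entry G A i h x else 0)"
proof -
  obtain d where "A i h = mmult G (diagmat d) (Pmat G h)"
    using assms unfolding graded_subst_def grade_def by blast
  then show ?thesis unfolding diag_entry_def using grade_entry[OF assms(2)] assms(3) by simp
qed

lemma letmat_entry:
  assumes A: "graded_subst G A" and l: "fst (snd l) \<in> carrier G"
    and x: "x \<in> carrier G" and y: "y \<in> carrier G"
  shows "letmat A l x y = (if y = x \<otimes> tau G l then letter_entry G A l x else 0)"
proof (cases l)
  case (fields i h starred)
  then have h: "h \<in> carrier G" using l by simp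
  show ?thesis
  proof (cases starred)
    case True
    have "x = y \<otimes> h \<longleftrightarrow> y = x \<otimes> inv h"
      using h x y by (metis inv_solve_right)
    then show ?thesis using True fields A h x y
      by (simp add: letmat_def transp_def graded_subst_entry tau_def letter_entry_def)
  next
    case False
    then show ?thesis using fields A h x
      by (simp add: letmat_def graded_subst_entry tau_def letter_entry_def)
  qed
qed

lemma wordmat_eq_path_product:
  assumes A: "graded_subst G A"
  shows "\<forall>l\<in>set w. fst (snd l) \<in> carrier G \<Longrightarrow> a \<in> carrier G \<Longrightarrow>
    wordmat G A w a b = (if b = a \<otimes> gprod G (map (tau G) w)
      then \<Prod>r<length w. letter_entry G A (w ! r) (a \<otimes> gprod G (map (tau G) (take r w))) else 0)"
proof (induction w arbitrary: a)
  case Nil then show ?case by (simp add: wordmat_def idmat_def gprod_def)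
next
  case (Cons l w)
  let ?path = "\<lambda>w. gprod G (map (tau G) w)"
  have tl: "tau G l \<in> carrier G" using Cons.prems tau_closed by simp
  have al: "a \<otimes> tau G l \<in> carrier G" using tl Cons.prems by simp
  have taus: "set (map (tau G) (take r w)) \<subseteq> carrier G" for r
    using Cons.prems by (intro taus_closed) (meson in_set_takeD list.set_intros(2))
  have shift: "a \<otimes> ?path (take (Suc r) (l # w)) = (a \<otimes> tau G l) \<otimes> ?path (take r w)" for r
    using gprod_Cons[OF tl taus] tl taus Cons.prems gprod_closed by (simp add: m_assoc)
  have "wordmat G A (l # w) a b = (\<Sum>c\<in>carrier G. letmat A l a c * wordmat G A w c b)"
    by (simp add: wordmat_def mmult_def)
  also have "\<dots> = (\<Sum>c\<in>carrier G. if c = a \<otimes> tau G l then letter_entry G A l a * wordmat G A w c b else 0)"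
    using Cons.prems A by (intro sum.cong) (auto simp: letmat_entry)
  also have "\<dots> = letter_entry G A l a * wordmat G A w (a \<otimes> tau G l) b"
    using al finite_carrier by (simp add: sum.delta)
  also have "\<dots> = (if b = a \<otimes> ?path (l # w) then letter_entry G A l a *
      (\<Prod>r<length w. letter_entry G A (w ! r) ((a \<otimes> tau G l) \<otimes> ?path (take r w))) else 0)"
    using Cons.IH[OF _ al] Cons.prems shift[of "length w"] by simp
  also have "\<dots> = (if b = a \<otimes> ?path (l # w)
      then \<Prod>r<length (l # w). letter_entry G A ((l # w) ! r) (a \<otimes> ?path (take r (l # w))) else 0)"
    unfolding length_Cons prod.lessThan_Suc_shift using Cons.prems shift by (simp add: gprod_def)
  finally show ?case .
qed

lemma wordmat_strong_mlin:
  assumes A: "graded_subst G A" and w: "strong_mlin G n w" and a: "a \<in> carrier G"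
  shows "wordmat G A w a b = (if b = a \<otimes> wgt G w
    then \<Prod>i\<in>{1..n}. diag_entry G A i (var_group w i) (a \<otimes> svar G w i) else 0)"
proof -
  have letters: "\<forall>l\<in>set w. fst (snd l) \<in> carrier G" and len: "length w = n"
    and dist: "distinct (map fst w)"
    using w unfolding strong_mlin_def by auto
  define e where "e i = diag_entry G A i (var_group w i) (a \<otimes> svar G w i)" for i
  have "letter_entry G A (w ! r) (a \<otimes> gprod G (map (tau G) (take r w))) = e (fst (w ! r))"
    if r: "r < n" for r
  proof -
    have "set (map (tau G) (take r w)) \<subseteq> carrier G"
      using letters by (intro taus_closed) (meson in_set_takeD)
    moreover have "fst (snd (w ! r)) \<in> carrier G" using letters r len by simp
    moreover have "r < length w" using r len by simp
    ultimately show ?thesis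
      unfolding e_def var_group_def letter_of_nth[OF dist \<open>r < length w\<close>]
        svar_nth[OF dist \<open>r < length w\<close>]
      using gprod_closed a by (simp add: letter_entry_def spos_def Let_def m_assoc)
  qed
  then have "(\<Prod>r<n. letter_entry G A (w ! r) (a \<otimes> gprod G (map (tau G) (take r w))))
      = (\<Prod>i\<in>{1..n}. e i)"
    using prod.reindex_bij_betw[OF strong_mlin_bij_betw_vars[OF w], of e] by simp
  then show ?thesis
    using wordmat_eq_path_product[OF A letters a, of b] len unfolding wgt_def e_def by simp
qed

lemma wordmat_eq_if_same_path_key:
  assumes A: "graded_subst G A" and m: "strong_mlin G n m" and m': "strong_mlin G n m'"
    and key: "path_key G n m = path_key G n m'" and a: "a \<in> carrier G"
  shows "wordmat G A m a b = wordmat G A m' a b"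
proof -
  have "(\<Prod>i\<in>{1..n}. diag_entry G A i (var_group m i) (a \<otimes> svar G m i))
      = (\<Prod>i\<in>{1..n}. diag_entry G A i (var_group m' i) (a \<otimes> svar G m' i))"
    using key unfolding path_key_eq_iff by (intro prod.cong) auto
  then show ?thesis
    using wordmat_strong_mlin[OF A m a] wordmat_strong_mlin[OF A m' a] key
    unfolding path_key_eq_iff by simp
qed

end

context finite_group
begin

lemma path_differences_subset_Istar_PGn: "path_differences G n \<subseteq> Istar G \<inter> PGn G n"
proof
  fix t assume "t \<in> path_differences G n"
  then obtain m m' where t: "t = (\<lambda>w. mono m w - mono m' w)" and m: "strong_mlin G n m"
    and m': "strong_mlin G n m'" and key: "path_key G n m = path_key G n m'"
    unfolding path_differences_def by blast
  have supp: "fsupp t \<subseteq> {m, m'}" unfolding t by (auto simp: fsupp_def mono_def)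
  then have "finite (fsupp t)" by (rule finite_subset) simp
  moreover have strong: "\<forall>w\<in>fsupp t. strong_mlin G n w" using supp m m' by blast
  moreover have "evalp G A t a b = 0"
    if A: "graded_subst G A" and a: "a \<in> carrier G" for A a b
  proof -
    have "evalp G A t a b = (\<Sum>w\<in>{m, m'}. of_rat (t w) * wordmat G A w a b)"
      by (rule evalp_superset[OF _ supp]) simp
    then show ?thesis
      using wordmat_eq_if_same_path_key[OF A m m' key a, of b] unfolding t
      by (cases "m = m'") (simp_all add: mono_def)
  qed
  ultimately show "t \<in> Istar G \<inter> PGn G n"
    unfolding Istar_def PGn_def Falg_def graded_subst_def using strong_mlin_letter by blast
qed

text \<open>The substitution \<open>x\<^sub>i\<^sub>,\<^sub>h \<mapsto> E\<^sub>s\<^sub>,\<^sub>s\<^sub>h\<close> with \<open>h\<close>, \<open>s\<close> the group label and row of \<open>x\<^sub>i\<close> in \<open>w\<^sub>0\<close>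
  (and \<open>\<mapsto> 0\<close> otherwise) sends a strongly multilinear \<open>w\<close> to a matrix whose \<open>(1, wgt w\<^sub>0)\<close>
  entry is \<open>1\<close> if \<open>w\<close> has the path key of \<open>w\<^sub>0\<close>, and \<open>0\<close> otherwise.\<close>
lemma Istar_PGn_path_key_fibre_sum:
  assumes f: "f \<in> Istar G \<inter> PGn G n" and w0: "w0 \<in> fsupp f"
  shows "(\<Sum>w\<in>{w\<in>fsupp f. path_key G n w = path_key G n w0}. f w) = 0"
proof -
  have fin: "finite (fsupp f)" and strong: "\<forall>w\<in>fsupp f. strong_mlin G n w"
    using f unfolding PGn_def by auto
  define d where "d i h x = (if i \<in> {1..n} \<and> h = var_group w0 i \<and> x = svar G w0 i then 1 else 0 :: complex)"
    for i h x
  define A where "A i h = mmult G (diagmat (d i h)) (Pmat G h)" for i h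
  have A: "graded_subst G A" unfolding graded_subst_def A_def grade_def by blast
  have entry: "diag_entry G A i h x = d i h x" if "h \<in> carrier G" "x \<in> carrier G" for i h x
    unfolding diag_entry_def A_def grade_entry[OF that(1)] using that by simp
  have indicator: "wordmat G A w \<one> (wgt G w0) = (if path_key G n w = path_key G n w0 then 1 else 0)"
    if w: "strong_mlin G n w" for w
  proof -
    have "(\<Prod>i\<in>{1..n}. diag_entry G A i (var_group w i) (\<one> \<otimes> svar G w i))
        = (\<Prod>i\<in>{1..n}. if var_group w i = var_group w0 i \<and> svar G w i = svar G w0 i then 1 else 0)"
      using var_group_closed[OF w] svar_closed[OF w] by (intro prod.cong refl) (auto simp: entry d_def)
    also have "\<dots> = (if \<forall>i\<in>{1..n}. var_group w i = var_group w0 i \<and> svar G w i = svar G w0 i then 1 else 0)"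
      by (simp add: prod_zero_iff)
    finally show ?thesis
      using wordmat_strong_mlin[OF A w one_closed, of "wgt G w0"] wgt_closed[of w] w
      unfolding path_key_eq_iff strong_mlin_def by auto
  qed
  have "evalp G A f \<one> (wgt G w0)
      = (\<Sum>w\<in>fsupp f. of_rat (f w) * (if path_key G n w = path_key G n w0 then 1 else 0))"
    unfolding evalp_def using indicator strong by (intro sum.cong refl) auto
  also have "\<dots> = of_rat (\<Sum>w\<in>{w\<in>fsupp f. path_key G n w = path_key G n w0}. f w)"
    using fin by (simp add: sum.inter_filter[symmetric] of_rat_sum if_distrib cong: if_cong)
  finally have "evalp G A f \<one> (wgt G w0) = of_rat (\<Sum>w\<in>{w\<in>fsupp f. path_key G n w = path_key G n w0}. f w)" .
  moreover have "wgt G w0 \<in> carrier G"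
    using wgt_closed strong w0 unfolding strong_mlin_def by blast
  then have "evalp G A f \<one> (wgt G w0) = 0"
    using f A unfolding Istar_def graded_subst_def by auto
  ultimately show ?thesis by simp
qed

lemma Istar_PGn_subset_Qspan: "Istar G \<inter> PGn G n \<subseteq> Qspan (path_differences G n)"
proof
  fix f assume f: "f \<in> Istar G \<inter> PGn G n"
  have fin: "finite (fsupp f)" and strong: "\<forall>w\<in>fsupp f. strong_mlin G n w"
    using f unfolding PGn_def by auto
  obtain rep where rep: "\<And>w. w \<in> fsupp f \<Longrightarrow> rep w \<in> fsupp f \<and> path_key G n (rep w) = path_key G n w"
    and f_eq: "f = (\<lambda>u. \<Sum>w\<in>fsupp f. f w * (mono w u - mono (rep w) u))"
    using fibre_sums_zero_decomposition[OF fin Istar_PGn_path_key_fibre_sum[OF f]] by blast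
  have "(\<lambda>u. mono w u - mono (rep w) u) \<in> path_differences G n" if "w \<in> fsupp f" for w
    using rep[OF that] strong that unfolding path_differences_def by force
  then show "f \<in> Qspan (path_differences G n)"
    by (subst f_eq) (intro sum_mem_Qspan fin ballI)
qed

end

theorem mainTheorem4:
  fixes G :: "('g, 'b) monoid_scheme" and n :: nat
  assumes "group G" and "finite (carrier G)" and "1 \<le> n"
  shows "Istar G \<inter> PGn G n =
    Qspan {(\<lambda>w. mono m w - mono (act \<pi> \<gamma> m) w) | m \<pi> \<gamma>. strong_mlin G n m \<and> path_transf G n m \<pi> \<gamma>}"
proof -
  interpret finite_group G
    using assms(1,2) by (simp add: finite_group_def finite_group_axioms_def)
  show ?thesis
    unfolding path_transf_differences_eq
    using Qspan_subset_Istar_PGn[OF path_differences_subset_Istar_PGn] Istar_PGn_subset_Qspan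
    by blast
qed

end
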